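(* Let $1\le p<\infty$. Let $\Pi=(t_k)_{k\in\mathbb{Z}}$ be a sampling sequence with constants $0<\delta\le\Delta$, and let $\chi$ be a kernel satisfying $(\chi1)$–$(\chi4)$, where in $(\chi3)$ the $\varphi$-function is $\psi(u)=u$, i.e. $|\chi(x,u)-\chi(x,v)|\le L(x)|u-v|$, with $L$ satisfying $(L1)$, $(L2)$ and $M_p(L):=\int_{\mathbb{R}}L(u)|u|^p\,du<+\infty$. Let $M_2>0$, $\theta_0>0$ be such that $\mathcal{T}_w(x)\le M_2w^{-\theta_0}$ for all $x\in\mathbb{R}$ and all sufficiently large $w$. Then for every $f\in L^p(\mathbb{R})$ and every sufficiently large $w>0$, $$\|S_wf-f\|_p\le\delta^{-1/p}[2m_{0,\Pi}(L)]^{(p-1)/p}\left[\|L\|_1+M_p(L)\right]^{1/p}\omega_p(f,1/w)+\delta^{-1/p}m_{0,\Pi}(L)\Delta^{1/p}\omega_p(f,\Delta/w)+M_2\|f\|_p\,w^{-\theta_0}.$$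
   Context: A $\varphi$-function is a continuous non-decreasing $\varphi:[0,\infty)\to[0,\infty)$ with $\varphi(0)=0$, $\varphi(u)>0$ for $u>0$, $\varphi(u)\to\infty$. A sampling sequence $\Pi=(t_k)$: strictly increasing reals, $t_k\to\pm\infty$ as $k\to\pm\infty$, with $\delta\le\Delta_k:=t_{k+1}-t_k\le\Delta$ for constants $0<\delta\le\Delta$. A kernel is $\chi:\mathbb{R}^2\to\mathbb{R}$ with: $(\chi1)$ $k\mapsto\chi(wx-t_k,u)\in\ell^1(\mathbb{Z})$ for all $x,u$, $w>0$; $(\chi2)$ $\chi(x,0)=0$; $(\chi3)$ measurable $L:\mathbb{R}\to[0,\infty)$ and a $\varphi$-function $\psi$ with $|\chi(x,u)-\chi(x,v)|\le L(x)\psi(|u-v|)$; $(\chi4)$ some $\theta_0>0$ with $\mathcal{T}_w(x):=\sup_{u\ne0}\left|\frac1u\sum_k\chi(wx-t_k,u)-1\right|=\mathcal{O}(w^{-\theta_0})$ as $w\to\infty$ uniformly in $x$. $(L1)$: $L\in L^1(\mathbb{R})$, bounded near $0$; $(L2)$: some $\beta_0>0$ with $\sup_u\sum_kL(u-t_k)|u-t_k|^{\beta_0}<\infty$. $m_{0,\Pi}(L):=\sup_{u\in\mathbb{R}}\sum_kL(u-t_k)$ (finite). Operators: $(S_wf)(x):=\sum_k\chi\!\left(wx-t_k,\frac{w}{\Delta_k}\int_{t_k/w}^{t_{k+1}/w}f(u)\,du\right)$. $L^p$-modulus of smoothness: $\omega_p(f,\delta'):=\sup_{|h|\le\delta'}\|f(\cdot+h)-f(\cdot)\|_p$.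 *)

theory Defs
  imports "HOL-Analysis.Analysis"
begin

definition sampling_seq :: "(int \<Rightarrow> real) \<Rightarrow> real \<Rightarrow> real \<Rightarrow> bool" where
  "sampling_seq t \<delta> \<Delta> \<longleftrightarrow> strict_mono t \<and> filterlim t at_top at_top \<and> filterlim t at_bot at_bot
     \<and> 0 < \<delta> \<and> \<delta> \<le> \<Delta> \<and> (\<forall>k. \<delta> \<le> t (k + 1) - t k \<and> t (k + 1) - t k \<le> \<Delta>)"

definition Tw :: "(real \<Rightarrow> real \<Rightarrow> real) \<Rightarrow> (int \<Rightarrow> real) \<Rightarrow> real \<Rightarrow> real \<Rightarrow> ereal" where
  "Tw K t w x = (SUP u\<in>UNIV - {0}. ereal \<bar>(1 / u) * (\<Sum>\<^sub>\<infinity>k. K (w * x - t k) u) - 1\<bar>)"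

definition kernel_lip :: "(real \<Rightarrow> real \<Rightarrow> real) \<Rightarrow> (int \<Rightarrow> real) \<Rightarrow> (real \<Rightarrow> real) \<Rightarrow> bool" where
  "kernel_lip K t L \<longleftrightarrow>
     (\<forall>x u w. w > 0 \<longrightarrow> (\<lambda>k. \<bar>K (w * x - t k) u\<bar>) summable_on UNIV)
   \<and> (\<forall>x. K x 0 = 0)
   \<and> L \<in> borel_measurable lborel \<and> (\<forall>x. 0 \<le> L x)
   \<and> (\<forall>x u v. \<bar>K x u - K x v\<bar> \<le> L x * \<bar>u - v\<bar>)
   \<and> (\<exists>\<theta>0. \<theta>0 > 0 \<and> (\<exists>C. \<forall>\<^sub>F w in at_top. \<forall>x. Tw K t w x \<le> ereal (C * w powr (- \<theta>0))))"

definition cond_L1 :: "(real \<Rightarrow> real) \<Rightarrow> bool" where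
  "cond_L1 L \<longleftrightarrow> integrable lborel L \<and> (\<exists>\<epsilon>. \<epsilon> > 0 \<and> (\<exists>B. \<forall>x. \<bar>x\<bar> < \<epsilon> \<longrightarrow> \<bar>L x\<bar> \<le> B))"

definition cond_L2 :: "(real \<Rightarrow> real) \<Rightarrow> (int \<Rightarrow> real) \<Rightarrow> bool" where
  "cond_L2 L t \<longleftrightarrow> (\<exists>\<beta>0. \<beta>0 > 0 \<and>
     (SUP u. (\<Sum>\<^sub>\<infinity>k. ennreal (L (u - t k) * \<bar>u - t k\<bar> powr \<beta>0))) < \<infinity>)"

definition m0_enn :: "(real \<Rightarrow> real) \<Rightarrow> (int \<Rightarrow> real) \<Rightarrow> ennreal" where
  "m0_enn L t = (SUP u. (\<Sum>\<^sub>\<infinity>k. ennreal (L (u - t k))))"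

definition m0 :: "(real \<Rightarrow> real) \<Rightarrow> (int \<Rightarrow> real) \<Rightarrow> real" where
  "m0 L t = enn2real (m0_enn L t)"

definition in_Lp :: "real \<Rightarrow> (real \<Rightarrow> real) \<Rightarrow> bool" where
  "in_Lp p f \<longleftrightarrow> f \<in> borel_measurable lborel \<and> (\<integral>\<^sup>+ x. ennreal (\<bar>f x\<bar> powr p) \<partial>lborel) < \<infinity>"

definition Lp_norm :: "real \<Rightarrow> (real \<Rightarrow> real) \<Rightarrow> ereal" where
  "Lp_norm p g = (let I = (\<integral>\<^sup>+ x. ennreal (\<bar>g x\<bar> powr p) \<partial>lborel) in
      if I = \<infinity> then \<infinity> else ereal (enn2real I powr (1 / p)))"

definition omega_p :: "real \<Rightarrow> (real \<Rightarrow> real) \<Rightarrow> real \<Rightarrow> ereal" where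
  "omega_p p f d = (SUP h\<in>{h. \<bar>h\<bar> \<le> d}. Lp_norm p (\<lambda>x. f (x + h) - f x))"

definition S_op :: "(real \<Rightarrow> real \<Rightarrow> real) \<Rightarrow> (int \<Rightarrow> real) \<Rightarrow> real \<Rightarrow> (real \<Rightarrow> real) \<Rightarrow> real \<Rightarrow> real" where
  "S_op K t w f x = (\<Sum>\<^sub>\<infinity>k. K (w * x - t k)
      ((w / (t (k + 1) - t k)) * (LINT u:{t k / w..t (k + 1) / w}|lborel. f u)))"

end

theory Submission
  imports Defs
begin

(* Write \<Delta>k = t (k + 1) - t k. The k-th sample of S_w f is the mean of f over a window of
   length \<Delta>k / w starting at t k / w. By the Lipschitz condition on the kernel,
   |S_w f x - f x| is at most

     \<Sum>k L (w x - t k) * mean_s |f (t k / w + s) - f (x + s)|     (node error)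
   + \<Sum>k L (w x - t k) * mean_s |f (x + s) - f x|                 (local error)
   + T_w(x) |f x|.

   Jensen's inequality, for the weights L (w x - t k) of total mass at most m0 and for each
   window mean, moves the p-th power inside both sums. After integrating in x and substituting
   y = w x - t k, the node error becomes an integral of |f (v + y / w) - f v|^p against L y,
   with v ranging over the disjoint windows; a shift by y / w costs at most
   (1 + |y|) \<omega>(f, 1/w), whence the factor \<parallel>L\<parallel>_1 + M_p(L). The local error only involves
   shifts by at most \<Delta> / w. Minkowski's inequality adds up the three terms. *)

section \<open>Jensen's and Minkowski's inequalities for extended nonnegative reals\<close>

(* Infinity is sent to infinity, so that p-th powers of nonnegative integrals need no
   finiteness side conditions. *)
definition ennreal_powr :: "ennreal \<Rightarrow> real \<Rightarrow> ennreal" where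
  "ennreal_powr z p = (if z = top then top else ennreal (enn2real z powr p))"

lemma ennreal_powr_ennreal [simp]: "0 \<le> r \<Longrightarrow> ennreal_powr (ennreal r) p = ennreal (r powr p)"
  by (simp add: ennreal_powr_def)

lemma ennreal_powr_top [simp]: "ennreal_powr top p = top"
  by (simp add: ennreal_powr_def)

lemma ennreal_powr_0 [simp]: "ennreal_powr 0 p = 0"
  by (simp add: ennreal_powr_def)

lemma ennreal_powr_eq_0_iff: "0 < p \<Longrightarrow> ennreal_powr z p = 0 \<longleftrightarrow> z = 0"
  by (cases z rule: ennreal_cases) (auto simp: ennreal_powr_def)

lemma ennreal_powr_mono: "0 < p \<Longrightarrow> a \<le> b \<Longrightarrow> ennreal_powr a p \<le> ennreal_powr b p"
  by (cases a rule: ennreal_cases; cases b rule: ennreal_cases)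
     (auto intro!: ennreal_leI powr_mono2 simp: ennreal_powr_def top_unique)

lemma ennreal_powr_cmult:
  assumes "0 < p" "0 \<le> c"
  shows "ennreal_powr (ennreal c * z) p = ennreal (c powr p) * ennreal_powr z p"
proof (cases z rule: ennreal_cases)
  case (real r)
  then have "ennreal_powr (ennreal c * z) p = ennreal ((c * r) powr p)"
    using assms by (simp add: ennreal_mult[symmetric])
  then show ?thesis
    using real assms by (simp add: powr_mult ennreal_mult)
next
  case top
  then show ?thesis
    using assms by (cases "c = 0") (simp_all add: ennreal_mult_top)
qed

lemma measurable_ennreal_powr [measurable]:
  assumes [measurable]: "F \<in> borel_measurable M"
  shows "(\<lambda>x. ennreal_powr (F x) p) \<in> borel_measurable M"
  unfolding ennreal_powr_def by measurable

lemma ennreal_mult_mult: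
  "0 \<le> a \<Longrightarrow> 0 \<le> b \<Longrightarrow> 0 \<le> c \<Longrightarrow> ennreal a * (ennreal b * ennreal c) = ennreal (a * b * c)"
  by (simp add: ennreal_mult mult.assoc)

lemma powr_prod4:
  fixes a b c d q :: real
  assumes "0 \<le> a" "0 \<le> b" "0 \<le> c" "0 \<le> d"
  shows "(a * b * c * d) powr q = a powr q * b powr q * c powr q * d powr q"
  using assms by (simp add: powr_mult)

lemma powr_root_powr:
  fixes x p :: real
  assumes "0 \<le> x" "0 < p"
  shows "(x powr - (1 / p)) powr p = 1 / x" and "(x powr (1 / p)) powr p = x"
proof -
  have "(x powr - (1 / p)) powr p = x powr (- 1)"
    using assms by (simp add: powr_powr)
  then show "(x powr - (1 / p)) powr p = 1 / x"
    using assms by (simp add: powr_minus_divide)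
  show "(x powr (1 / p)) powr p = x"
    using assms by (simp add: powr_powr)
qed

lemma Young_tangent:
  fixes p y c :: real
  assumes p: "1 \<le> p" and y: "0 \<le> y" and c: "0 < c"
  shows "y \<le> y powr p / (p * c powr (p - 1)) + (1 - 1 / p) * c"
proof (cases "y = 0")
  case False
  have "(y powr p / c powr (p - 1)) powr (1 / p) * c powr (1 - 1 / p)
      \<le> (1 / p) * (y powr p / c powr (p - 1)) + (1 - 1 / p) * c"
    by (rule Youngs_inequality_0) (use p y c False in auto)
  moreover have "(y powr p / c powr (p - 1)) powr (1 / p) * c powr (1 - 1 / p) = y"
    using p y c by (simp add: powr_divide powr_powr diff_divide_distrib)
  ultimately show ?thesis by simp
qed (use p c in simp)

lemma ennreal_Young_tangent:
  assumes p: "1 \<le> p" and c: "0 < c"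
  shows "y \<le> ennreal (1 / (p * c powr (p - 1))) * ennreal_powr y p + ennreal ((1 - 1 / p) * c)"
proof (cases y rule: ennreal_cases)
  case (real r)
  define a where "a = 1 / (p * c powr (p - 1))"
  define b where "b = (1 - 1 / p) * c"
  have ab: "0 \<le> a" "0 \<le> b" using p c by (auto simp: a_def b_def)
  have "ennreal r \<le> ennreal (a * r powr p + b)"
    using Young_tangent[OF p real(1) c] by (intro ennreal_leI) (simp add: a_def b_def)
  also have "\<dots> = ennreal a * ennreal (r powr p) + ennreal b"
    using ab by (simp add: ennreal_mult)
  finally show ?thesis
    using real by (simp only: ennreal_powr_ennreal a_def b_def)
qed (use p c in \<open>simp add: ennreal_mult_top\<close>)

lemma powr_Young_optimum:
  fixes c M p :: real
  assumes c: "0 < c" and M: "0 < M" and p: "1 \<le> p"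
  defines "s \<equiv> (c / M) powr (1 / p)"
  shows "c / (p * s powr (p - 1)) + (1 - 1 / p) * s * M = s * M"
    and "(s * M) powr p = M powr (p - 1) * c"
proof -
  have s: "0 < s" using c M by (simp add: s_def)
  have sp: "s powr p = c / M"
    using c M p by (simp add: s_def powr_powr)
  have "s powr (p - 1) = c / (M * s)"
    using s by (simp add: powr_diff sp)
  then have "c / (p * s powr (p - 1)) = s * M / p"
    using c M s p by (simp add: field_simps)
  then show "c / (p * s powr (p - 1)) + (1 - 1 / p) * s * M = s * M"
    using p by (simp add: field_simps)
  show "(s * M) powr p = M powr (p - 1) * c"
    using s M by (simp add: powr_mult sp powr_diff)
qed

lemma nn_integral_Young_tangent_le:
  fixes W y :: "'a \<Rightarrow> ennreal"
  assumes p: "1 \<le> p" and [measurable]: "W \<in> borel_measurable N" "y \<in> borel_measurable N"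
    and W: "(\<integral>\<^sup>+x. W x \<partial>N) \<le> ennreal M" and s: "0 < s"
  shows "(\<integral>\<^sup>+x. W x * y x \<partial>N) \<le> ennreal (1 / (p * s powr (p - 1))) *
    (\<integral>\<^sup>+x. W x * ennreal_powr (y x) p \<partial>N) + ennreal ((1 - 1 / p) * s) * ennreal M"
proof -
  define a where "a = 1 / (p * s powr (p - 1))"
  define b where "b = (1 - 1 / p) * s"
  have "(\<integral>\<^sup>+x. W x * y x \<partial>N) \<le> (\<integral>\<^sup>+x. ennreal a * (W x * ennreal_powr (y x) p) + ennreal b * W x \<partial>N)"
  proof (rule nn_integral_mono)
    fix x
    have "W x * y x \<le> W x * (ennreal a * ennreal_powr (y x) p + ennreal b)"
      using ennreal_Young_tangent[OF p s] by (intro mult_left_mono) (simp_all add: a_def b_def)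
    then show "W x * y x \<le> ennreal a * (W x * ennreal_powr (y x) p) + ennreal b * W x"
      by (simp add: distrib_left ac_simps)
  qed
  also have "\<dots> = ennreal a * (\<integral>\<^sup>+x. W x * ennreal_powr (y x) p \<partial>N) + ennreal b * (\<integral>\<^sup>+x. W x \<partial>N)"
    by (simp add: nn_integral_add nn_integral_cmult)
  also have "\<dots> \<le> ennreal a * (\<integral>\<^sup>+x. W x * ennreal_powr (y x) p \<partial>N) + ennreal b * ennreal M"
    using W by (intro add_left_mono mult_left_mono) auto
  finally show ?thesis
    by (simp add: a_def b_def)
qed

lemma Jensen_nn_integral_powr:
  fixes W y :: "'a \<Rightarrow> ennreal"
  assumes p: "1 \<le> p" and [measurable]: "W \<in> borel_measurable N" "y \<in> borel_measurable N"
    and M: "0 \<le> M" and W: "(\<integral>\<^sup>+x. W x \<partial>N) \<le> ennreal M"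
  shows "ennreal_powr (\<integral>\<^sup>+x. W x * y x \<partial>N) p
    \<le> ennreal (M powr (p - 1)) * (\<integral>\<^sup>+x. W x * ennreal_powr (y x) p \<partial>N)"
    (is "?lhs \<le> ennreal (M powr (p - 1)) * ?C")
proof -
  have p0: "0 < p" using p by simp
  have lhs_0: "?lhs = 0" if "AE x in N. W x = 0 \<or> y x = 0"
  proof -
    have "(\<integral>\<^sup>+x. W x * y x \<partial>N) = 0"
      using that by (simp add: nn_integral_0_iff_AE)
    then show ?thesis by simp
  qed
  consider "M = 0" | "?C = 0" | "?C = top" "0 < M" | "0 < M" "0 < ?C" "?C < top"
    using M by (metis less_top not_gr_zero order_less_le)
  then show ?thesis
  proof cases
    case 1
    then have "AE x in N. W x = 0"
      using W by (simp add: nn_integral_0_iff_AE)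
    then have "?lhs = 0"
      by (intro lhs_0) (auto elim: eventually_mono)
    then show ?thesis by simp
  next
    case 2
    then have "AE x in N. W x * ennreal_powr (y x) p = 0"
      by (simp add: nn_integral_0_iff_AE)
    then have "?lhs = 0"
      by (intro lhs_0) (simp add: ennreal_powr_eq_0_iff[OF p0])
    then show ?thesis by simp
  next
    case 3
    then show ?thesis by (simp add: ennreal_mult_top)
  next
    case 4
    define c where "c = enn2real ?C"
    have C: "?C = ennreal c" and c: "0 < c"
      using 4 by (auto simp: c_def enn2real_positive_iff less_top)
    define s where "s = (c / M) powr (1 / p)"
    have s: "0 < s" using c 4 by (simp add: s_def)
    \<comment> \<open>For this choice of \<open>s\<close> the integrated tangent bound is sharp.\<close>
    have "(\<integral>\<^sup>+x. W x * y x \<partial>N) \<le> ennreal (1 / (p * s powr (p - 1))) * ennreal c + ennreal ((1 - 1 / p) * s) * ennreal M"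
      using nn_integral_Young_tangent_le[OF p assms(2,3) W s] by (simp add: C)
    also have "\<dots> = ennreal (1 / (p * s powr (p - 1)) * c + (1 - 1 / p) * s * M)"
    proof -
      have "ennreal a * ennreal c' + ennreal b * ennreal M' = ennreal (a * c' + b * M')"
        if "0 \<le> a" "0 \<le> b" "0 \<le> c'" "0 \<le> M'" for a b c' M' :: real
        using that by (simp add: ennreal_mult)
      then show ?thesis
        using p s c M by (simp add: mult.assoc)
    qed
    also have "1 / (p * s powr (p - 1)) * c + (1 - 1 / p) * s * M = s * M"
      using powr_Young_optimum(1)[OF c \<open>0 < M\<close> p] by (simp add: s_def)
    finally have "?lhs \<le> ennreal_powr (ennreal (s * M)) p"
      by (rule ennreal_powr_mono[OF p0])
    also have "\<dots> = ennreal ((s * M) powr p)"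
      using s M by (intro ennreal_powr_ennreal) simp
    also have "\<dots> = ennreal (M powr (p - 1)) * ?C"
      unfolding powr_Young_optimum(2)[OF c \<open>0 < M\<close> p, folded s_def] C
      using c by (simp add: ennreal_mult)
    finally show ?thesis .
  qed
qed

lemma ennreal_powr_add_le:
  assumes p: "1 \<le> p" and A: "0 < A" and B: "0 < B"
  shows "ennreal_powr (a + b) p \<le> ennreal ((A + B) powr (p - 1)) *
    (ennreal (A powr (1 - p)) * ennreal_powr a p + ennreal (B powr (1 - p)) * ennreal_powr b p)"
proof -
  have p0: "0 < p" using p by simp
  have weight: "X * (1 / X) powr p = X powr (1 - p)" if "0 < X" for X :: real
    using that by (simp add: powr_divide powr_diff)
  have cancel: "ennreal X * (ennreal (1 / X) * z) = z" if "0 < X" for X :: real and z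
    using that by (simp add: mult.assoc[symmetric] ennreal_mult[symmetric])
  \<comment> \<open>Jensen's inequality for the two-point measure with weights \<open>A\<close> and \<open>B\<close>.\<close>
  define W :: "bool \<Rightarrow> ennreal" where "W i = ennreal (if i then A else B)" for i
  define y where "y i = (if i then ennreal (1 / A) * a else ennreal (1 / B) * b)" for i
  have "a + b = (\<integral>\<^sup>+i. W i * y i \<partial>count_space UNIV)"
    using A B by (simp add: nn_integral_count_space_finite UNIV_bool W_def y_def cancel add.commute)
  moreover have "(\<integral>\<^sup>+i. W i \<partial>count_space UNIV) \<le> ennreal (A + B)"
    using A B by (simp add: nn_integral_count_space_finite UNIV_bool W_def add.commute)
  moreover have "(\<integral>\<^sup>+i. W i * ennreal_powr (y i) p \<partial>count_space UNIV)
      = ennreal (A powr (1 - p)) * ennreal_powr a p + ennreal (B powr (1 - p)) * ennreal_powr b p"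
    using A B by (simp add: nn_integral_count_space_finite UNIV_bool W_def y_def ennreal_powr_cmult[OF p0]
        mult.assoc[symmetric] ennreal_mult[symmetric] weight add.commute)
  ultimately show ?thesis
    using Jensen_nn_integral_powr[OF p, of W "count_space UNIV" y "A + B"] A B by simp
qed

lemma Minkowski_nn_integral_powr:
  fixes F G :: "'a \<Rightarrow> ennreal"
  assumes p: "1 \<le> p" and [measurable]: "F \<in> borel_measurable M" "G \<in> borel_measurable M"
    and A: "0 \<le> A" and B: "0 \<le> B"
    and F: "(\<integral>\<^sup>+x. ennreal_powr (F x) p \<partial>M) \<le> ennreal (A powr p)"
    and G: "(\<integral>\<^sup>+x. ennreal_powr (G x) p \<partial>M) \<le> ennreal (B powr p)"
  shows "(\<integral>\<^sup>+x. ennreal_powr (F x + G x) p \<partial>M) \<le> ennreal ((A + B) powr p)"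
proof -
  have p0: "0 < p" using p by simp
  have drop_null: "(\<integral>\<^sup>+x. ennreal_powr (H x + H' x) p \<partial>M) = (\<integral>\<^sup>+x. ennreal_powr (H' x) p \<partial>M)"
    if "(\<integral>\<^sup>+x. ennreal_powr (H x) p \<partial>M) \<le> ennreal (0 powr p)" "H \<in> borel_measurable M" for H H'
  proof -
    have "AE x in M. H x = 0"
      using that by (simp add: nn_integral_0_iff_AE ennreal_powr_eq_0_iff[OF p0])
    then show ?thesis
      by (intro nn_integral_cong_AE) (auto elim: eventually_mono)
  qed
  consider "A = 0" | "B = 0" | "0 < A" "0 < B"
    using A B by linarith
  then show ?thesis
  proof cases
    case 1
    then show ?thesis
      using drop_null[of F G] F G by simp
  next
    case 2
    then show ?thesis
      using drop_null[of G F] F G by (simp add: add.commute)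
  next
    case 3
    define \<alpha> where "\<alpha> = A powr (1 - p)"
    define \<beta> where "\<beta> = B powr (1 - p)"
    have "(\<integral>\<^sup>+x. ennreal_powr (F x + G x) p \<partial>M)
        \<le> (\<integral>\<^sup>+x. ennreal ((A + B) powr (p - 1)) *
              (ennreal \<alpha> * ennreal_powr (F x) p + ennreal \<beta> * ennreal_powr (G x) p) \<partial>M)"
      unfolding \<alpha>_def \<beta>_def by (intro nn_integral_mono ennreal_powr_add_le[OF p 3])
    also have "\<dots> = ennreal ((A + B) powr (p - 1)) *
        (ennreal \<alpha> * (\<integral>\<^sup>+x. ennreal_powr (F x) p \<partial>M) + ennreal \<beta> * (\<integral>\<^sup>+x. ennreal_powr (G x) p \<partial>M))"
      by (simp add: nn_integral_add nn_integral_cmult)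
    also have "\<dots> \<le> ennreal ((A + B) powr (p - 1)) * (ennreal \<alpha> * ennreal (A powr p) + ennreal \<beta> * ennreal (B powr p))"
      using F G by (intro mult_left_mono add_mono) auto
    also have "\<dots> = ennreal ((A + B) powr (p - 1) * (A + B))"
      using 3 by (simp add: \<alpha>_def \<beta>_def ennreal_mult[symmetric] powr_add[symmetric] flip: ennreal_plus)
    also have "(A + B) powr (p - 1) * (A + B) = (A + B) powr p"
      using 3 by (simp add: powr_diff)
    finally show ?thesis .
  qed
qed

section \<open>Sums over the integers\<close>

lemma nn_integral_count_space_int:
  "(\<integral>\<^sup>+k. g k \<partial>count_space UNIV) = (\<Sum>n. g (int_decode n))"
  using nn_integral_bij_count_space[OF bij_int_decode, of g] by (simp add: nn_integral_count_space_nat)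

lemma borel_measurable_nn_integral_count_space_int [measurable (raw)]:
  fixes g :: "int \<Rightarrow> 'a \<Rightarrow> ennreal"
  assumes [measurable]: "\<And>k. (\<lambda>x. g k x) \<in> borel_measurable M"
  shows "(\<lambda>x. \<integral>\<^sup>+k. g k x \<partial>count_space UNIV) \<in> borel_measurable M"
proof -
  have "(\<lambda>x. \<integral>\<^sup>+k. g k x \<partial>count_space UNIV) = (\<lambda>x. \<Sum>n. g (int_decode n) x)"
    by (simp add: nn_integral_count_space_int)
  then show ?thesis by simp
qed

lemma infsum_ennreal_int_eq_nn_integral:
  "infsum (g :: int \<Rightarrow> ennreal) UNIV = (\<integral>\<^sup>+k. g k \<partial>count_space UNIV)"
proof -
  have "(\<lambda>n. g (int_decode n)) sums infsum (\<lambda>n. g (int_decode n)) UNIV"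
    by (intro has_sum_imp_sums has_sum_infsum nonneg_summable_on_complete) simp
  then show ?thesis
    by (simp add: sums_iff nn_integral_count_space_int infsum_reindex_bij_betw[OF bij_int_decode])
qed

lemma abs_infsum_le_ennreal_infsum:
  fixes c :: "'a \<Rightarrow> real"
  assumes fin: "infsum (\<lambda>k. ennreal \<bar>c k\<bar>) UNIV < top"
  shows "c summable_on UNIV" "ennreal \<bar>infsum c UNIV\<bar> \<le> infsum (\<lambda>k. ennreal \<bar>c k\<bar>) UNIV"
proof -
  let ?S = "infsum (\<lambda>k. ennreal \<bar>c k\<bar>) UNIV"
  have "sum (\<lambda>k. \<bar>c k\<bar>) F \<le> enn2real ?S" if "finite F" for F
  proof -
    have "ennreal (sum (\<lambda>k. \<bar>c k\<bar>) F) = sum (\<lambda>k. ennreal \<bar>c k\<bar>) F"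
      by simp
    also have "\<dots> \<le> ?S"
      using nonneg_infsum_complete[of UNIV "\<lambda>k. ennreal \<bar>c k\<bar>"] that
      by (auto intro!: SUP_upper)
    finally have "ennreal (sum (\<lambda>k. \<bar>c k\<bar>) F) \<le> ?S" .
    then show ?thesis
      using fin by (metis enn2real_ennreal enn2real_mono sum_nonneg abs_ge_zero)
  qed
  then have "bdd_above (sum (\<lambda>x. norm (c x)) ` {F. F \<subseteq> UNIV \<and> finite F})"
    by (intro bdd_aboveI[where M = "enn2real ?S"]) auto
  then show summable: "c summable_on UNIV"
    by (metis abs_summable_iff_bdd_above summable_on_iff_abs_summable_on_real)
  then have abs_summable: "(\<lambda>k. \<bar>c k\<bar>) summable_on UNIV"
    using summable_on_iff_abs_summable_on_real by auto
  have "ennreal (infsum (\<lambda>k. \<bar>c k\<bar>) UNIV)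
      = (SUP F\<in>{F. finite F \<and> F \<subseteq> UNIV}. ennreal (sum (\<lambda>k. \<bar>c k\<bar>) F))"
    using abs_summable by (intro infsum_nonneg_is_SUPREMUM_ennreal) auto
  also have "\<dots> = ?S"
    by (simp add: nonneg_infsum_complete)
  finally have "ennreal (infsum (\<lambda>k. \<bar>c k\<bar>) UNIV) = ?S" .
  moreover have "\<bar>infsum c UNIV\<bar> \<le> infsum (\<lambda>k. \<bar>c k\<bar>) UNIV"
    using norm_infsum_bound[of c UNIV] summable summable_on_iff_abs_summable_on_real by auto
  ultimately show "ennreal \<bar>infsum c UNIV\<bar> \<le> ?S"
    using ennreal_leI by fastforce
qed

lemma nn_integral_indicator_partition_le_1:
  fixes t :: "int \<Rightarrow> real"
  assumes "strict_mono t"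
  shows "(\<integral>\<^sup>+k. indicator {t k..<t (k + 1)} v \<partial>count_space UNIV) \<le> (1 :: ennreal)"
proof (cases "\<exists>k0. v \<in> {t k0..<t (k0 + 1)}")
  case True
  then obtain k0 where k0: "v \<in> {t k0..<t (k0 + 1)}" by blast
  have t_le: "t i \<le> t j" if "i \<le> j" for i j
    using assms that by (simp add: strict_mono_less_eq)
  have unique: "k = k0" if k: "v \<in> {t k..<t (k + 1)}" for k
  proof (rule ccontr)
    assume "k \<noteq> k0"
    then have "k + 1 \<le> k0 \<or> k0 + 1 \<le> k" by linarith
    then have "t (k + 1) \<le> t k0 \<or> t (k0 + 1) \<le> t k"
      using t_le by blast
    moreover have "t k \<le> v" "v < t (k + 1)" "t k0 \<le> v" "v < t (k0 + 1)"
      using k k0 by auto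
    ultimately show False by linarith
  qed
  have "indicator {t k..<t (k + 1)} v = (indicator {k0} k :: ennreal)" for k
    using unique[of k] k0 by (cases "k = k0") (auto simp: indicator_def)
  then show ?thesis by simp
next
  case False
  then have "(\<lambda>k. indicator {t k..<t (k + 1)} v :: ennreal) = (\<lambda>k. 0)"
    by (auto simp: indicator_def)
  then show ?thesis by simp
qed

section \<open>Translates of \<open>L\<^sup>p\<close> functions\<close>

lemma nn_integral_lborel_shift:
  fixes g :: "real \<Rightarrow> ennreal"
  assumes [measurable]: "g \<in> borel_measurable borel"
  shows "(\<integral>\<^sup>+x. g (x + h) \<partial>lborel) = (\<integral>\<^sup>+x. g x \<partial>lborel)"
  using nn_integral_real_affine[of g 1 h] by (simp add: add.commute)

lemma ennreal_le_powr_if_root_le: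
  assumes p: "0 < p" and z: "z < top" and a: "enn2real z powr (1 / p) \<le> a"
  shows "z \<le> ennreal (a powr p)"
proof -
  have "enn2real z = (enn2real z powr (1 / p)) powr p"
    using p by (simp add: powr_powr)
  also have "\<dots> \<le> a powr p"
    using a p by (intro powr_mono2) auto
  finally have "ennreal (enn2real z) \<le> ennreal (a powr p)"
    by (rule ennreal_leI)
  then show ?thesis
    using z by (simp add: less_top)
qed

lemma Lp_norm_le:
  assumes p: "0 < p" and A: "0 \<le> A"
    and I: "(\<integral>\<^sup>+x. ennreal (\<bar>g x\<bar> powr p) \<partial>lborel) \<le> ennreal (A powr p)"
  shows "Lp_norm p g \<le> ereal A"
proof -
  let ?I = "\<integral>\<^sup>+x. ennreal (\<bar>g x\<bar> powr p) \<partial>lborel"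
  have "?I \<noteq> top"
    using I by (metis ennreal_less_top less_le_trans order.strict_iff_not)
  moreover have "enn2real ?I powr (1 / p) \<le> (A powr p) powr (1 / p)"
    using I p A by (intro powr_mono2) (auto simp: enn2real_leI)
  ultimately show ?thesis
    using p A by (simp add: Lp_norm_def Let_def powr_powr)
qed

lemma abs_le_1_plus_powr:
  fixes r p :: real
  assumes "1 \<le> p"
  shows "\<bar>r\<bar> \<le> 1 + \<bar>r\<bar> powr p"
proof (cases "\<bar>r\<bar> \<le> 1")
  case False
  then have "\<bar>r\<bar> powr 1 \<le> \<bar>r\<bar> powr p"
    using assms by (intro powr_mono) auto
  then show ?thesis using False by simp
qed (simp add: add_increasing2)

lemma ennreal_abs_set_integral_le:
  fixes g :: "'a \<Rightarrow> real"
  shows "ennreal \<bar>set_lebesgue_integral M A g\<bar> \<le> (\<integral>\<^sup>+u. indicator A u * ennreal \<bar>g u\<bar> \<partial>M)"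
proof -
  have "ennreal (norm (set_lebesgue_integral M A g)) \<le> (\<integral>\<^sup>+u. ennreal (norm (indicator A u *\<^sub>R g u)) \<partial>M)"
  proof (cases "integrable M (\<lambda>u. indicator A u *\<^sub>R g u)")
    case True
    then show ?thesis
      unfolding set_lebesgue_integral_def by (rule integral_norm_bound_ennreal)
  qed (simp add: set_lebesgue_integral_def not_integrable_integral_eq)
  also have "\<dots> = (\<integral>\<^sup>+u. indicator A u * ennreal \<bar>g u\<bar> \<partial>M)"
    by (intro nn_integral_cong) (simp split: split_indicator)
  finally show ?thesis by simp
qed

locale Lp_function =
  fixes p :: real and f :: "real \<Rightarrow> real"
  assumes p: "1 \<le> p" and in_Lp: "in_Lp p f"
begin

lemma p_pos: "0 < p"
  using p by simp

lemma borel_measurable_f [measurable]: "f \<in> borel_measurable borel"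
  using in_Lp by (simp add: in_Lp_def)

definition norm_f :: real where
  "norm_f = enn2real (\<integral>\<^sup>+x. ennreal (\<bar>f x\<bar> powr p) \<partial>lborel) powr (1 / p)"

lemma norm_f_nonneg: "0 \<le> norm_f"
  by (simp add: norm_f_def)

lemma nn_integral_powr_f: "(\<integral>\<^sup>+x. ennreal (\<bar>f x\<bar> powr p) \<partial>lborel) = ennreal (norm_f powr p)"
  using in_Lp p_pos by (simp add: in_Lp_def norm_f_def powr_powr less_top)

lemma Lp_norm_f: "Lp_norm p f = ereal norm_f"
  using in_Lp by (simp add: Lp_norm_def in_Lp_def norm_f_def Let_def)

lemma nn_integral_powr_f_shift:
  "(\<integral>\<^sup>+x. ennreal (\<bar>f (x + h)\<bar> powr p) \<partial>lborel) = ennreal (norm_f powr p)"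
  by (subst nn_integral_lborel_shift) (simp_all add: nn_integral_powr_f)

definition shift_diff :: "real \<Rightarrow> ennreal" where
  "shift_diff h = (\<integral>\<^sup>+x. ennreal (\<bar>f (x + h) - f x\<bar> powr p) \<partial>lborel)"

lemma shift_diff_0 [simp]: "shift_diff 0 = 0"
  by (simp add: shift_diff_def)

lemma shift_diff_translate:
  "(\<integral>\<^sup>+x. ennreal (\<bar>f (x + a + h) - f (x + a)\<bar> powr p) \<partial>lborel) = shift_diff h"
  using nn_integral_lborel_shift[of "\<lambda>y. ennreal (\<bar>f (y + h) - f y\<bar> powr p)" a]
  by (simp add: shift_diff_def add.assoc add.commute[of a])

lemma shift_diff_triangle:
  assumes "shift_diff h1 \<le> ennreal (A powr p)" "shift_diff h2 \<le> ennreal (B powr p)" "0 \<le> A" "0 \<le> B"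
  shows "shift_diff (h1 + h2) \<le> ennreal ((A + B) powr p)"
proof -
  have "shift_diff (h1 + h2) \<le> (\<integral>\<^sup>+x. ennreal_powr
      (ennreal \<bar>f (x + h2 + h1) - f (x + h2)\<bar> + ennreal \<bar>f (x + h2) - f x\<bar>) p \<partial>lborel)"
    unfolding shift_diff_def
  proof (rule nn_integral_mono)
    fix x
    have "\<bar>f (x + (h1 + h2)) - f x\<bar> \<le> \<bar>f (x + h2 + h1) - f (x + h2)\<bar> + \<bar>f (x + h2) - f x\<bar>"
      by (simp add: ac_simps)
    then show "ennreal (\<bar>f (x + (h1 + h2)) - f x\<bar> powr p) \<le> ennreal_powr
      (ennreal \<bar>f (x + h2 + h1) - f (x + h2)\<bar> + ennreal \<bar>f (x + h2) - f x\<bar>) p"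
      using p_pos by (simp flip: ennreal_plus add: ennreal_leI powr_mono2)
  qed
  also have "\<dots> \<le> ennreal ((A + B) powr p)"
    using assms by (intro Minkowski_nn_integral_powr[OF p]) (simp_all add: shift_diff_translate shift_diff_def)
  finally show ?thesis .
qed

lemma shift_diff_le_norm: "shift_diff h \<le> ennreal ((2 * norm_f) powr p)"
proof -
  have "shift_diff h \<le> (\<integral>\<^sup>+x. ennreal_powr (ennreal \<bar>f (x + h)\<bar> + ennreal \<bar>f x\<bar>) p \<partial>lborel)"
    unfolding shift_diff_def using p_pos
    by (intro nn_integral_mono) (simp flip: ennreal_plus add: ennreal_leI powr_mono2 abs_triangle_ineq4)
  also have "\<dots> \<le> ennreal ((norm_f + norm_f) powr p)"
    by (intro Minkowski_nn_integral_powr[OF p])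
       (simp_all add: nn_integral_powr_f_shift nn_integral_powr_f norm_f_nonneg)
  finally show ?thesis by simp
qed

lemma shift_diff_less_top: "shift_diff h < top"
  using shift_diff_le_norm[of h] by (simp add: le_less_trans)

lemma Lp_norm_shift_diff:
  "Lp_norm p (\<lambda>x. f (x + h) - f x) = ereal (enn2real (shift_diff h) powr (1 / p))"
  using shift_diff_less_top[of h] by (simp add: Lp_norm_def shift_diff_def[symmetric] Let_def)

definition modulus :: "real \<Rightarrow> real" where
  "modulus d = real_of_ereal (omega_p p f d)"

lemma omega_p_eq_modulus:
  assumes d: "0 \<le> d"
  shows "omega_p p f d = ereal (modulus d)" and "0 \<le> modulus d"
proof -
  have omega: "omega_p p f d = (SUP h\<in>{h. \<bar>h\<bar> \<le> d}. ereal (enn2real (shift_diff h) powr (1 / p)))"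
    by (simp add: omega_p_def Lp_norm_shift_diff)
  have "enn2real (shift_diff h) powr (1 / p) \<le> 2 * norm_f" for h
  proof -
    have "enn2real (shift_diff h) powr (1 / p) \<le> ((2 * norm_f) powr p) powr (1 / p)"
      using shift_diff_le_norm[of h] p_pos by (intro powr_mono2) (auto simp: enn2real_leI)
    then show ?thesis
      using p_pos norm_f_nonneg by (simp add: powr_powr)
  qed
  then have "omega_p p f d \<le> ereal (2 * norm_f)"
    unfolding omega by (intro SUP_least) auto
  moreover have "0 \<le> omega_p p f d"
    unfolding omega using d by (intro SUP_upper2[where i = 0]) auto
  then have "\<bar>omega_p p f d\<bar> \<noteq> \<infinity>"
    using \<open>omega_p p f d \<le> ereal (2 * norm_f)\<close> by auto
  then show "omega_p p f d = ereal (modulus d)"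
    unfolding modulus_def by (simp add: ereal_real')
  then show "0 \<le> modulus d"
    using \<open>0 \<le> omega_p p f d\<close> by simp
qed

lemma shift_diff_le_modulus:
  assumes "\<bar>h\<bar> \<le> d"
  shows "shift_diff h \<le> ennreal (modulus d powr p)"
proof (rule ennreal_le_powr_if_root_le[OF p_pos shift_diff_less_top])
  have "ereal (enn2real (shift_diff h) powr (1 / p)) \<le> omega_p p f d"
    unfolding omega_p_def Lp_norm_shift_diff using assms by (intro SUP_upper) auto
  then show "enn2real (shift_diff h) powr (1 / p) \<le> modulus d"
    using assms by (simp add: omega_p_eq_modulus)
qed

lemma shift_diff_le_multiple:
  assumes d: "0 \<le> d"
  shows "\<bar>h\<bar> \<le> real n * d \<Longrightarrow> shift_diff h \<le> ennreal ((real n * modulus d) powr p)"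
proof (induction n arbitrary: h)
  case (Suc n)
  define h2 where "h2 = max (- d) (min d h)"
  have "\<bar>h\<bar> \<le> real n * d + d" "0 \<le> real n * d"
    using d Suc.prems by (simp_all add: algebra_simps)
  then have "\<bar>h2\<bar> \<le> d" "\<bar>h - h2\<bar> \<le> real n * d"
    using d unfolding h2_def by (simp_all add: abs_le_iff max_def min_def)
  then have "shift_diff (h - h2 + h2) \<le> ennreal ((real n * modulus d + modulus d) powr p)"
    using d by (intro shift_diff_triangle Suc.IH shift_diff_le_modulus) (simp_all add: omega_p_eq_modulus)
  then show ?case
    by (simp add: algebra_simps)
qed simp

lemma shift_diff_div_le:
  assumes w: "0 < w"
  shows "shift_diff (y / w) \<le> ennreal (((1 + \<bar>y\<bar>) * modulus (1 / w)) powr p)"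
proof -
  define n where "n = nat \<lceil>\<bar>y\<bar>\<rceil>"
  have n: "\<bar>y\<bar> \<le> real n" "real n \<le> 1 + \<bar>y\<bar>"
    by (simp_all add: n_def) linarith
  have "\<bar>y / w\<bar> \<le> real n * (1 / w)"
    using n w by (simp add: divide_right_mono)
  then have "shift_diff (y / w) \<le> ennreal ((real n * modulus (1 / w)) powr p)"
    using w by (intro shift_diff_le_multiple) simp_all
  also have "\<dots> \<le> ennreal (((1 + \<bar>y\<bar>) * modulus (1 / w)) powr p)"
    using omega_p_eq_modulus(2)[of "1 / w"] n w p_pos
    by (intro ennreal_leI powr_mono2 mult_right_mono) auto
  finally show ?thesis .
qed

lemma nn_integral_shift_diff_Icc_le:
  assumes "0 \<le> d"
  shows "(\<integral>\<^sup>+x. (\<integral>\<^sup>+s. indicator {0..d} s * ennreal (\<bar>f (x + s) - f x\<bar> powr p) \<partial>lborel) \<partial>lborel)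
    \<le> ennreal (modulus d powr p) * ennreal d"
proof -
  have "(\<integral>\<^sup>+x. (\<integral>\<^sup>+s. indicator {0..d} s * ennreal (\<bar>f (x + s) - f x\<bar> powr p) \<partial>lborel) \<partial>lborel)
      = (\<integral>\<^sup>+s. indicator {0..d} s * shift_diff s \<partial>lborel)"
    unfolding shift_diff_def by (subst lborel_pair.Fubini') (simp_all add: nn_integral_cmult)
  also have "\<dots> \<le> (\<integral>\<^sup>+s. ennreal (modulus d powr p) * indicator {0..d} s \<partial>lborel)"
    by (intro nn_integral_mono) (simp add: shift_diff_le_modulus split: split_indicator)
  also have "\<dots> = ennreal (modulus d powr p) * ennreal d"
    using assms by (simp add: nn_integral_cmult_indicator)
  finally show ?thesis .
qed

lemma nn_integral_Icc_abs_f_le: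
  assumes "a \<le> b"
  shows "(\<integral>\<^sup>+u. indicator {a..b} u * ennreal \<bar>f u\<bar> \<partial>lborel) \<le> ennreal (b - a + norm_f powr p)"
proof -
  have "ennreal \<bar>r\<bar> \<le> 1 + ennreal (\<bar>r\<bar> powr p)" for r
  proof -
    have "ennreal \<bar>r\<bar> \<le> ennreal (1 + \<bar>r\<bar> powr p)"
      by (intro ennreal_leI abs_le_1_plus_powr p)
    then show ?thesis by simp
  qed
  then have "(\<integral>\<^sup>+u. indicator {a..b} u * ennreal \<bar>f u\<bar> \<partial>lborel)
      \<le> (\<integral>\<^sup>+u. indicator {a..b} u + ennreal (\<bar>f u\<bar> powr p) \<partial>lborel)"
    by (intro nn_integral_mono) (simp split: split_indicator)
  also have "\<dots> = ennreal (b - a + norm_f powr p)"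
    using assms by (simp add: nn_integral_add nn_integral_powr_f)
  finally show ?thesis .
qed

lemma set_integrable_Icc_f:
  assumes "a \<le> b"
  shows "set_integrable lborel {a..b} f"
  unfolding set_integrable_def
proof (rule integrableI_bounded)
  have "(\<integral>\<^sup>+u. ennreal (norm (indicator {a..b} u *\<^sub>R f u)) \<partial>lborel)
      = (\<integral>\<^sup>+u. indicator {a..b} u * ennreal \<bar>f u\<bar> \<partial>lborel)"
    by (intro nn_integral_cong) (simp split: split_indicator)
  also have "\<dots> < top"
    using nn_integral_Icc_abs_f_le[OF assms] by (simp add: le_less_trans)
  finally show "(\<integral>\<^sup>+u. ennreal (norm (indicator {a..b} u *\<^sub>R f u)) \<partial>lborel) < \<infinity>"
    by simp
qed simp

lemma abs_average_le:
  assumes ab: "a < b"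
  shows "\<bar>1 / (b - a) * (LINT u:{a..b}|lborel. f u)\<bar> \<le> 1 + norm_f powr p / (b - a)"
proof -
  have "ennreal \<bar>LINT u:{a..b}|lborel. f u\<bar> \<le> ennreal (b - a + norm_f powr p)"
    using ennreal_abs_set_integral_le nn_integral_Icc_abs_f_le ab
    by (metis less_imp_le order_trans)
  then have "\<bar>LINT u:{a..b}|lborel. f u\<bar> \<le> b - a + norm_f powr p"
    using ab by (subst (asm) ennreal_le_iff) auto
  then have "\<bar>LINT u:{a..b}|lborel. f u\<bar> / (b - a) \<le> (b - a + norm_f powr p) / (b - a)"
    using ab by (simp add: divide_right_mono)
  then show ?thesis
    using ab by (simp add: abs_mult add_divide_distrib)
qed

lemma average_diff_le:
  assumes ab: "a < b"
  shows "ennreal \<bar>1 / (b - a) * (LINT u:{a..b}|lborel. f u) - y\<bar>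
    \<le> (\<integral>\<^sup>+s. ennreal (1 / (b - a)) * indicator {0..<b - a} s * ennreal \<bar>f (a + s) - y\<bar> \<partial>lborel)"
proof -
  have const: "set_integrable lborel {a..b} (\<lambda>_. y)"
    unfolding set_integrable_def using ab by (intro integrable_indicator) auto
  have "(LINT u:{a..b}|lborel. y) = (b - a) * y"
    using ab by (subst set_integral_const) auto
  have "1 / (b - a) * (LINT u:{a..b}|lborel. f u) - y = 1 / (b - a) * (LINT u:{a..b}|lborel. f u - y)"
    using ab \<open>(LINT u:{a..b}|lborel. y) = (b - a) * y\<close>
    by (simp add: set_integral_diff(2)[OF set_integrable_Icc_f const] field_simps)
  then have "ennreal \<bar>1 / (b - a) * (LINT u:{a..b}|lborel. f u) - y\<bar>
      = ennreal (1 / (b - a) * \<bar>LINT u:{a..b}|lborel. f u - y\<bar>)"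
    using ab by (simp add: abs_mult)
  also have "\<dots> = ennreal (1 / (b - a)) * ennreal \<bar>LINT u:{a..b}|lborel. f u - y\<bar>"
    using ab by (intro ennreal_mult) auto
  also have "\<dots> \<le> ennreal (1 / (b - a)) * (\<integral>\<^sup>+u. indicator {a..b} u * ennreal \<bar>f u - y\<bar> \<partial>lborel)"
    by (intro mult_left_mono ennreal_abs_set_integral_le) simp
  also have "(\<integral>\<^sup>+u. indicator {a..b} u * ennreal \<bar>f u - y\<bar> \<partial>lborel)
      = (\<integral>\<^sup>+s. indicator {a..b} (s + a) * ennreal \<bar>f (s + a) - y\<bar> \<partial>lborel)"
    by (rule nn_integral_lborel_shift[symmetric]) measurable
  also have "\<dots> = (\<integral>\<^sup>+s. indicator {0..<b - a} s * ennreal \<bar>f (a + s) - y\<bar> \<partial>lborel)"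
    using AE_lborel_singleton[of "b - a"]
    by (intro nn_integral_cong_AE) (auto elim!: eventually_mono split: split_indicator simp: add.commute)
  finally show ?thesis
    by (simp add: nn_integral_cmult[symmetric] mult.assoc)
qed

end

section \<open>The sampling operator\<close>

lemma abs_kernel_sum_sub_le:
  assumes K0: "\<And>x. K x 0 = 0" and T: "Tw K t w x \<le> ereal \<tau>"
  shows "\<bar>infsum (\<lambda>k. K (w * x - t k) v) UNIV - v\<bar> \<le> \<tau> * \<bar>v\<bar>"
proof (cases "v = 0")
  case False
  have "ereal \<bar>(1 / v) * infsum (\<lambda>k. K (w * x - t k) v) UNIV - 1\<bar> \<le> Tw K t w x"
    unfolding Tw_def by (rule SUP_upper) (use False in auto)
  also note T
  finally have "\<bar>(1 / v) * infsum (\<lambda>k. K (w * x - t k) v) UNIV - 1\<bar> \<le> \<tau>"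
    by simp
  then have "\<bar>(1 / v) * infsum (\<lambda>k. K (w * x - t k) v) UNIV - 1\<bar> * \<bar>v\<bar> \<le> \<tau> * \<bar>v\<bar>"
    by (rule mult_right_mono) simp
  then show ?thesis
    using False by (simp add: abs_mult[symmetric] algebra_simps)
qed (simp add: K0)

locale Kantorovich_operator = Lp_function p f
  for p :: real and f :: "real \<Rightarrow> real" +
  fixes \<delta> \<Delta> :: real and t :: "int \<Rightarrow> real" and K :: "real \<Rightarrow> real \<Rightarrow> real"
    and L :: "real \<Rightarrow> real" and w :: real
  assumes sampling: "sampling_seq t \<delta> \<Delta>" and kernel: "kernel_lip K t L"
    and m0_finite: "m0_enn L t < \<infinity>" and w_pos: "0 < w"
begin

lemma delta_pos: "0 < \<delta>"
  using sampling by (simp add: sampling_seq_def)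

lemma Delta_pos: "0 < \<Delta>"
  using sampling by (simp add: sampling_seq_def)

lemma gap_ge: "\<delta> \<le> t (k + 1) - t k"
  using sampling by (simp add: sampling_seq_def)

lemma gap_le: "t (k + 1) - t k \<le> \<Delta>"
  using sampling by (simp add: sampling_seq_def)

lemma gap_pos: "0 < t (k + 1) - t k"
  using delta_pos gap_ge[of k] by linarith

lemma strict_mono_t: "strict_mono t"
  using sampling by (simp add: sampling_seq_def)

lemma borel_measurable_L [measurable]: "L \<in> borel_measurable borel"
  using kernel by (simp add: kernel_lip_def)

lemma L_nonneg: "0 \<le> L x"
  using kernel by (simp add: kernel_lip_def)

lemma K_Lipschitz: "\<bar>K x u - K x v\<bar> \<le> L x * \<bar>u - v\<bar>"
  using kernel by (simp add: kernel_lip_def)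

lemma K_0: "K x 0 = 0"
  using kernel by (simp add: kernel_lip_def)

abbreviation m :: real where
  "m \<equiv> m0 L t"

lemma m_nonneg: "0 \<le> m"
  by (simp add: m0_def)

lemma nn_integral_L_samples_le: "(\<integral>\<^sup>+k. ennreal (L (u - t k)) \<partial>count_space UNIV) \<le> ennreal m"
proof -
  have "m0_enn L t = ennreal m"
    using m0_finite by (simp add: m0_def less_top)
  then show ?thesis
    unfolding infsum_ennreal_int_eq_nn_integral[symmetric]
    by (metis m0_enn_def SUP_upper UNIV_I)
qed

lemma infsum_dominated_less_top:
  assumes "\<And>k. \<bar>c k\<bar> \<le> L (u - t k) * B" and "0 \<le> B"
  shows "infsum (\<lambda>k. ennreal \<bar>c k\<bar>) UNIV < top"
proof -
  have "infsum (\<lambda>k. ennreal \<bar>c k\<bar>) UNIV \<le> (\<integral>\<^sup>+k. ennreal (L (u - t k)) * ennreal B \<partial>count_space UNIV)"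
    unfolding infsum_ennreal_int_eq_nn_integral
    using assms by (intro nn_integral_mono) (simp add: ennreal_mult[symmetric] L_nonneg ennreal_leI)
  also have "\<dots> \<le> ennreal m * ennreal B"
    by (simp add: nn_integral_multc mult_right_mono nn_integral_L_samples_le)
  also have "\<dots> < top"
    by (simp add: ennreal_mult_less_top)
  finally show ?thesis .
qed

(* The windows are half-open so that, shifted to the nodes t k / w, they are disjoint. *)
definition window :: "int \<Rightarrow> real \<Rightarrow> ennreal" where
  "window k s = ennreal (w / (t (k + 1) - t k)) * indicator {0..<(t (k + 1) - t k) / w} s"

lemma borel_measurable_window [measurable]: "window k \<in> borel_measurable borel"
  unfolding window_def by measurable

lemma nn_integral_window: "(\<integral>\<^sup>+s. window k s \<partial>lborel) = 1"
  using gap_pos[of k] w_pos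
  by (simp add: window_def nn_integral_cmult_indicator ennreal_mult[symmetric])

lemma window_le_uniform: "window k s \<le> ennreal (w / \<delta>) * indicator {0..\<Delta> / w} s"
proof (cases "s \<in> {0..<(t (k + 1) - t k) / w}")
  case True
  moreover have "(t (k + 1) - t k) / w \<le> \<Delta> / w"
    using gap_le[of k] w_pos by (simp add: divide_right_mono)
  ultimately have "s \<in> {0..\<Delta> / w}"
    by auto
  moreover have "w / (t (k + 1) - t k) \<le> w / \<delta>"
    using gap_ge[of k] delta_pos w_pos by (intro divide_left_mono) auto
  ultimately show ?thesis
    using True by (simp add: window_def ennreal_leI)
qed (simp add: window_def)

definition sample :: "int \<Rightarrow> real" where
  "sample k = w / (t (k + 1) - t k) * (LINT u:{t k / w..t (k + 1) / w}|lborel. f u)"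

lemma sample_eq_average:
  "sample k = 1 / (t (k + 1) / w - t k / w) * (LINT u:{t k / w..t (k + 1) / w}|lborel. f u)"
  using w_pos by (simp add: sample_def diff_divide_distrib[symmetric])

lemma sample_interval: "t k / w < t (k + 1) / w"
  using gap_pos[of k] w_pos by (simp add: divide_strict_right_mono)

lemma abs_sample_le: "\<bar>sample k\<bar> \<le> 1 + norm_f powr p * w / \<delta>"
proof -
  have "\<bar>sample k\<bar> \<le> 1 + norm_f powr p / (t (k + 1) / w - t k / w)"
    unfolding sample_eq_average by (rule abs_average_le[OF sample_interval])
  also have "norm_f powr p / (t (k + 1) / w - t k / w) = norm_f powr p * w / (t (k + 1) - t k)"
    using w_pos by (simp add: diff_divide_distrib[symmetric])
  also have "\<dots> \<le> norm_f powr p * w / \<delta>"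
    using gap_ge[of k] delta_pos w_pos by (intro divide_left_mono) auto
  finally show ?thesis by simp
qed

lemma sample_diff_le:
  "ennreal \<bar>sample k - y\<bar> \<le> (\<integral>\<^sup>+s. window k s * ennreal \<bar>f (t k / w + s) - y\<bar> \<partial>lborel)"
proof -
  have "window k s = ennreal (1 / (t (k + 1) / w - t k / w)) * indicator {0..<t (k + 1) / w - t k / w} s" for s
    by (simp add: window_def diff_divide_distrib[symmetric])
  then show ?thesis
    unfolding sample_eq_average by (simp only:) (rule average_diff_le[OF sample_interval])
qed

(* Splitting f (t k / w + s) - f x at f (x + s) gives the two parts of the pointwise error. *)
definition node_error :: "real \<Rightarrow> ennreal" where
  "node_error x = (\<integral>\<^sup>+k. ennreal (L (w * x - t k)) *
     (\<integral>\<^sup>+s. window k s * ennreal \<bar>f (t k / w + s) - f (x + s)\<bar> \<partial>lborel) \<partial>count_space UNIV)"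

definition local_error :: "real \<Rightarrow> ennreal" where
  "local_error x = (\<integral>\<^sup>+k. ennreal (L (w * x - t k)) *
     (\<integral>\<^sup>+s. window k s * ennreal \<bar>f (x + s) - f x\<bar> \<partial>lborel) \<partial>count_space UNIV)"

lemma borel_measurable_node_error [measurable]: "node_error \<in> borel_measurable borel"
  unfolding node_error_def by measurable

lemma borel_measurable_local_error [measurable]: "local_error \<in> borel_measurable borel"
  unfolding local_error_def by measurable

lemma abs_kernel_sample_diff_le:
  "ennreal \<bar>K (w * x - t k) (sample k) - K (w * x - t k) (f x)\<bar>
    \<le> ennreal (L (w * x - t k)) * (\<integral>\<^sup>+s. window k s * ennreal \<bar>f (t k / w + s) - f (x + s)\<bar> \<partial>lborel)
      + ennreal (L (w * x - t k)) * (\<integral>\<^sup>+s. window k s * ennreal \<bar>f (x + s) - f x\<bar> \<partial>lborel)"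
proof -
  have "(\<integral>\<^sup>+s. window k s * ennreal \<bar>f (t k / w + s) - f x\<bar> \<partial>lborel)
      \<le> (\<integral>\<^sup>+s. window k s * ennreal \<bar>f (t k / w + s) - f (x + s)\<bar>
            + window k s * ennreal \<bar>f (x + s) - f x\<bar> \<partial>lborel)"
    by (intro nn_integral_mono)
       (simp add: distrib_left[symmetric] mult_left_mono ennreal_leI flip: ennreal_plus)
  also have "\<dots> = (\<integral>\<^sup>+s. window k s * ennreal \<bar>f (t k / w + s) - f (x + s)\<bar> \<partial>lborel)
      + (\<integral>\<^sup>+s. window k s * ennreal \<bar>f (x + s) - f x\<bar> \<partial>lborel)"
    by (rule nn_integral_add) measurable
  finally have triangle: "(\<integral>\<^sup>+s. window k s * ennreal \<bar>f (t k / w + s) - f x\<bar> \<partial>lborel)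
      \<le> (\<integral>\<^sup>+s. window k s * ennreal \<bar>f (t k / w + s) - f (x + s)\<bar> \<partial>lborel)
        + (\<integral>\<^sup>+s. window k s * ennreal \<bar>f (x + s) - f x\<bar> \<partial>lborel)" .
  have "ennreal \<bar>K (w * x - t k) (sample k) - K (w * x - t k) (f x)\<bar>
      \<le> ennreal (L (w * x - t k) * \<bar>sample k - f x\<bar>)"
    by (intro ennreal_leI K_Lipschitz)
  also have "\<dots> = ennreal (L (w * x - t k)) * ennreal \<bar>sample k - f x\<bar>"
    by (simp add: ennreal_mult L_nonneg)
  also have "\<dots> \<le> ennreal (L (w * x - t k)) * (\<integral>\<^sup>+s. window k s * ennreal \<bar>f (t k / w + s) - f x\<bar> \<partial>lborel)"
    by (intro mult_left_mono sample_diff_le) simp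
  also have "\<dots> \<le> ennreal (L (w * x - t k)) *
      ((\<integral>\<^sup>+s. window k s * ennreal \<bar>f (t k / w + s) - f (x + s)\<bar> \<partial>lborel)
        + (\<integral>\<^sup>+s. window k s * ennreal \<bar>f (x + s) - f x\<bar> \<partial>lborel))"
    by (intro mult_left_mono triangle) simp
  finally show ?thesis
    by (simp add: distrib_left)
qed

lemma abs_kernel_sample_sum_le:
  assumes summable: "infsum (\<lambda>k. ennreal \<bar>d k\<bar>) UNIV < top"
    and d: "\<And>k. d k = K (w * x - t k) (sample k) - K (w * x - t k) (f x)"
  shows "ennreal \<bar>infsum d UNIV\<bar> \<le> node_error x + local_error x"
proof -
  have "ennreal \<bar>infsum d UNIV\<bar> \<le> (\<integral>\<^sup>+k. ennreal \<bar>d k\<bar> \<partial>count_space UNIV)"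
    using abs_infsum_le_ennreal_infsum(2)[OF summable] by (simp add: infsum_ennreal_int_eq_nn_integral)
  also have "\<dots> \<le> (\<integral>\<^sup>+k. ennreal (L (w * x - t k)) *
        (\<integral>\<^sup>+s. window k s * ennreal \<bar>f (t k / w + s) - f (x + s)\<bar> \<partial>lborel)
      + ennreal (L (w * x - t k)) * (\<integral>\<^sup>+s. window k s * ennreal \<bar>f (x + s) - f x\<bar> \<partial>lborel)
      \<partial>count_space UNIV)"
    unfolding d by (intro nn_integral_mono abs_kernel_sample_diff_le)
  also have "\<dots> = node_error x + local_error x"
    unfolding node_error_def local_error_def by (rule nn_integral_add) simp_all
  finally show ?thesis .
qed

lemma abs_S_op_sub_le:
  assumes T: "Tw K t w x \<le> ereal \<tau>"
  shows "ennreal \<bar>S_op K t w f x - f x\<bar> \<le> node_error x + local_error x + ennreal (\<tau> * \<bar>f x\<bar>)"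
proof -
  define d where "d k = K (w * x - t k) (sample k) - K (w * x - t k) (f x)" for k
  define c where "c k = K (w * x - t k) (f x)" for k
  define B where "B = 1 + norm_f powr p * w / \<delta> + \<bar>f x\<bar>"
  have d_summable: "infsum (\<lambda>k. ennreal \<bar>d k\<bar>) UNIV < top"
  proof (rule infsum_dominated_less_top)
    fix k
    have "\<bar>sample k - f x\<bar> \<le> B"
      using abs_sample_le[of k] by (simp add: B_def)
    then show "\<bar>d k\<bar> \<le> L (w * x - t k) * B"
      unfolding d_def by (metis K_Lipschitz L_nonneg mult_left_mono order_trans)
  qed (use w_pos delta_pos in \<open>simp add: B_def\<close>)
  have c_summable: "infsum (\<lambda>k. ennreal \<bar>c k\<bar>) UNIV < top"
    by (rule infsum_dominated_less_top[where B = "\<bar>f x\<bar>"])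
       (use K_Lipschitz[of _ "f x" 0] in \<open>simp_all add: c_def K_0\<close>)
  have "S_op K t w f x = infsum (\<lambda>k. d k + c k) UNIV"
    by (simp add: S_op_def d_def c_def sample_def)
  also have "\<dots> = infsum d UNIV + infsum c UNIV"
    by (intro infsum_add abs_infsum_le_ennreal_infsum(1) d_summable c_summable)
  finally have "ennreal \<bar>S_op K t w f x - f x\<bar> \<le> ennreal \<bar>infsum d UNIV\<bar> + ennreal \<bar>infsum c UNIV - f x\<bar>"
    by (simp flip: ennreal_plus add: ennreal_leI)
  also have "\<dots> \<le> node_error x + local_error x + ennreal (\<tau> * \<bar>f x\<bar>)"
    using abs_kernel_sum_sub_le[OF K_0 T, of "f x"]
    by (intro add_mono abs_kernel_sample_sum_le[OF d_summable] ennreal_leI) (simp_all add: d_def c_def[abs_def])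
  finally show ?thesis .
qed

lemma ennreal_powr_window_average_le:
  assumes [measurable]: "y \<in> borel_measurable borel"
  shows "ennreal_powr (\<integral>\<^sup>+s. window k s * y s \<partial>lborel) p \<le> (\<integral>\<^sup>+s. window k s * ennreal_powr (y s) p \<partial>lborel)"
  using Jensen_nn_integral_powr[OF p, of "window k" lborel y 1] by (simp add: nn_integral_window)

lemma ennreal_powr_error_sum_le:
  fixes Y :: "int \<Rightarrow> real \<Rightarrow> ennreal"
  assumes [measurable]: "\<And>k. Y k \<in> borel_measurable borel"
  shows "ennreal_powr (\<integral>\<^sup>+k. ennreal (L (u - t k)) * (\<integral>\<^sup>+s. window k s * Y k s \<partial>lborel) \<partial>count_space UNIV) p
    \<le> ennreal (m powr (p - 1)) *
       (\<integral>\<^sup>+k. ennreal (L (u - t k)) * (\<integral>\<^sup>+s. window k s * ennreal_powr (Y k s) p \<partial>lborel) \<partial>count_space UNIV)"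
proof -
  have "ennreal_powr (\<integral>\<^sup>+k. ennreal (L (u - t k)) * (\<integral>\<^sup>+s. window k s * Y k s \<partial>lborel) \<partial>count_space UNIV) p
    \<le> ennreal (m powr (p - 1)) *
       (\<integral>\<^sup>+k. ennreal (L (u - t k)) * ennreal_powr (\<integral>\<^sup>+s. window k s * Y k s \<partial>lborel) p \<partial>count_space UNIV)"
    by (rule Jensen_nn_integral_powr[OF p]) (simp_all add: m_nonneg nn_integral_L_samples_le)
  also have "\<dots> \<le> ennreal (m powr (p - 1)) *
       (\<integral>\<^sup>+k. ennreal (L (u - t k)) * (\<integral>\<^sup>+s. window k s * ennreal_powr (Y k s) p \<partial>lborel) \<partial>count_space UNIV)"
    by (intro mult_left_mono nn_integral_mono ennreal_powr_window_average_le) simp_all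
  finally show ?thesis .
qed

definition weighted_shift_diff :: "real \<Rightarrow> ennreal" where
  "weighted_shift_diff v = (\<integral>\<^sup>+y. ennreal (L y) * ennreal (\<bar>f (v + y / w) - f v\<bar> powr p) \<partial>lborel)"

lemma borel_measurable_weighted_shift_diff [measurable]: "weighted_shift_diff \<in> borel_measurable borel"
  unfolding weighted_shift_diff_def by measurable

lemma nn_integral_weighted_shift_diff:
  "(\<integral>\<^sup>+v. weighted_shift_diff v \<partial>lborel) = (\<integral>\<^sup>+y. ennreal (L y) * shift_diff (y / w) \<partial>lborel)"
proof -
  have "(\<integral>\<^sup>+v. weighted_shift_diff v \<partial>lborel)
      = (\<integral>\<^sup>+y. (\<integral>\<^sup>+v. ennreal (L y) * ennreal (\<bar>f (v + y / w) - f v\<bar> powr p) \<partial>lborel) \<partial>lborel)"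
    unfolding weighted_shift_diff_def by (rule lborel_pair.Fubini'[symmetric]) measurable
  then show ?thesis
    by (simp add: nn_integral_cmult shift_diff_def)
qed

lemma nn_integral_node_kernel:
  "(\<integral>\<^sup>+x. ennreal (L (w * x - c)) * ennreal (\<bar>f (c / w + s) - f (x + s)\<bar> powr p) \<partial>lborel)
    = ennreal (1 / w) * weighted_shift_diff (c / w + s)"
proof -
  have "(\<integral>\<^sup>+x. ennreal (L (w * x - c)) * ennreal (\<bar>f (c / w + s) - f (x + s)\<bar> powr p) \<partial>lborel)
      = ennreal \<bar>1 / w\<bar> * (\<integral>\<^sup>+y. ennreal (L (w * (c / w + 1 / w * y) - c)) *
          ennreal (\<bar>f (c / w + s) - f (c / w + 1 / w * y + s)\<bar> powr p) \<partial>lborel)"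
    by (rule nn_integral_real_affine) (use w_pos in auto)
  also have "\<dots> = ennreal (1 / w) * weighted_shift_diff (c / w + s)"
  proof -
    have "w * (c / w + 1 / w * y) - c = y" for y
      using w_pos by (simp add: field_simps)
    moreover have "\<bar>f (c / w + s) - f (c / w + 1 / w * y + s)\<bar> = \<bar>f (c / w + s + y / w) - f (c / w + s)\<bar>" for y
      by (simp add: abs_minus_commute add_ac)
    ultimately show ?thesis
      using w_pos by (simp add: weighted_shift_diff_def)
  qed
  finally show ?thesis .
qed

lemma nn_integral_node_term_le:
  "(\<integral>\<^sup>+x. ennreal (L (w * x - t k)) *
      (\<integral>\<^sup>+s. window k s * ennreal (\<bar>f (t k / w + s) - f (x + s)\<bar> powr p) \<partial>lborel) \<partial>lborel)
    \<le> ennreal (1 / \<delta>) * (\<integral>\<^sup>+v. indicator {t k / w..<t (k + 1) / w} v * weighted_shift_diff v \<partial>lborel)"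
proof -
  let ?I = "{0..<(t (k + 1) - t k) / w}"
  have "(\<integral>\<^sup>+x. ennreal (L (w * x - t k)) *
      (\<integral>\<^sup>+s. window k s * ennreal (\<bar>f (t k / w + s) - f (x + s)\<bar> powr p) \<partial>lborel) \<partial>lborel)
    = (\<integral>\<^sup>+x. (\<integral>\<^sup>+s. window k s *
        (ennreal (L (w * x - t k)) * ennreal (\<bar>f (t k / w + s) - f (x + s)\<bar> powr p)) \<partial>lborel) \<partial>lborel)"
    by (intro nn_integral_cong) (simp add: nn_integral_cmult[symmetric] ac_simps)
  also have "\<dots> = (\<integral>\<^sup>+s. window k s * (ennreal (1 / w) * weighted_shift_diff (t k / w + s)) \<partial>lborel)"
    by (subst lborel_pair.Fubini') (simp_all add: nn_integral_cmult nn_integral_node_kernel)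
  also have "\<dots> \<le> (\<integral>\<^sup>+s. ennreal (1 / \<delta>) * (indicator ?I s * weighted_shift_diff (t k / w + s)) \<partial>lborel)"
  proof (intro nn_integral_mono)
    fix s
    have "window k s * ennreal (1 / w) \<le> ennreal (1 / \<delta>) * indicator ?I s"
    proof (cases "s \<in> ?I")
      case True
      have "w / (t (k + 1) - t k) * (1 / w) \<le> 1 / \<delta>"
        using w_pos gap_ge[of k] delta_pos by (simp add: frac_le)
      then show ?thesis
        using True w_pos gap_pos[of k] by (simp add: window_def ennreal_mult[symmetric] ennreal_leI)
    qed (simp add: window_def)
    then show "window k s * (ennreal (1 / w) * weighted_shift_diff (t k / w + s))
        \<le> ennreal (1 / \<delta>) * (indicator ?I s * weighted_shift_diff (t k / w + s))"
      by (metis mult.assoc mult_right_mono zero_le)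
  qed
  also have "\<dots> = ennreal (1 / \<delta>) * (\<integral>\<^sup>+s. indicator ?I s * weighted_shift_diff (t k / w + s) \<partial>lborel)"
    by (rule nn_integral_cmult) measurable
  also have "(\<integral>\<^sup>+s. indicator ?I s * weighted_shift_diff (t k / w + s) \<partial>lborel)
      = (\<integral>\<^sup>+v. indicator {t k / w..<t (k + 1) / w} (v + t k / w) * weighted_shift_diff (v + t k / w) \<partial>lborel)"
    using w_pos by (intro nn_integral_cong) (auto simp: indicator_def add.commute diff_divide_distrib)
  also have "\<dots> = (\<integral>\<^sup>+v. indicator {t k / w..<t (k + 1) / w} v * weighted_shift_diff v \<partial>lborel)"
    by (rule nn_integral_lborel_shift) measurable
  finally show ?thesis .
qed

lemma nn_integral_node_error_powr_le:
  "(\<integral>\<^sup>+x. ennreal_powr (node_error x) p \<partial>lborel)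
    \<le> ennreal (m powr (p - 1) / \<delta>) * (\<integral>\<^sup>+y. ennreal (L y) * shift_diff (y / w) \<partial>lborel)"
proof -
  let ?g = "\<lambda>k x. ennreal (L (w * x - t k)) *
      (\<integral>\<^sup>+s. window k s * ennreal (\<bar>f (t k / w + s) - f (x + s)\<bar> powr p) \<partial>lborel)"
  let ?I = "\<lambda>k. {t k / w..<t (k + 1) / w}"
  have "(\<integral>\<^sup>+x. ennreal_powr (node_error x) p \<partial>lborel)
      \<le> (\<integral>\<^sup>+x. ennreal (m powr (p - 1)) * (\<integral>\<^sup>+k. ?g k x \<partial>count_space UNIV) \<partial>lborel)"
    unfolding node_error_def
    by (intro nn_integral_mono order_trans[OF ennreal_powr_error_sum_le]) simp_all
  also have "\<dots> = ennreal (m powr (p - 1)) * (\<integral>\<^sup>+k. (\<integral>\<^sup>+x. ?g k x \<partial>lborel) \<partial>count_space UNIV)"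
    by (simp add: nn_integral_cmult nn_integral_count_space_nn_integral)
  also have "\<dots> \<le> ennreal (m powr (p - 1)) *
      (\<integral>\<^sup>+k. ennreal (1 / \<delta>) * (\<integral>\<^sup>+v. indicator (?I k) v * weighted_shift_diff v \<partial>lborel) \<partial>count_space UNIV)"
    by (intro mult_left_mono nn_integral_mono nn_integral_node_term_le) simp
  also have "\<dots> = ennreal (m powr (p - 1)) * ennreal (1 / \<delta>) *
      (\<integral>\<^sup>+v. (\<integral>\<^sup>+k. indicator (?I k) v \<partial>count_space UNIV) * weighted_shift_diff v \<partial>lborel)"
  proof -
    have "(\<integral>\<^sup>+k. (\<integral>\<^sup>+v. indicator (?I k) v * weighted_shift_diff v \<partial>lborel) \<partial>count_space UNIV)
        = (\<integral>\<^sup>+v. (\<integral>\<^sup>+k. indicator (?I k) v \<partial>count_space UNIV) * weighted_shift_diff v \<partial>lborel)"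
      by (subst nn_integral_count_space_nn_integral[symmetric]) (simp_all add: nn_integral_multc)
    then show ?thesis
      by (simp add: nn_integral_cmult mult.assoc)
  qed
  also have "\<dots> \<le> ennreal (m powr (p - 1)) * ennreal (1 / \<delta>) * (\<integral>\<^sup>+v. weighted_shift_diff v \<partial>lborel)"
  proof (intro mult_left_mono nn_integral_mono)
    have "strict_mono (\<lambda>k. t k / w)"
      using strict_mono_t w_pos by (simp add: strict_mono_def divide_strict_right_mono)
    from nn_integral_indicator_partition_le_1[OF this]
    show "(\<integral>\<^sup>+k. indicator (?I k) v \<partial>count_space UNIV) * weighted_shift_diff v \<le> weighted_shift_diff v" for v
      by (metis mult_1 mult_right_mono zero_le)
  qed simp
  finally show ?thesis
    using m_nonneg delta_pos by (simp add: nn_integral_weighted_shift_diff ennreal_mult[symmetric] divide_inverse)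
qed

lemma nn_integral_L_shift_diff_le:
  "(\<integral>\<^sup>+y. ennreal (L y) * shift_diff (y / w) \<partial>lborel)
    \<le> ennreal (2 powr (p - 1) * modulus (1 / w) powr p) *
      ((\<integral>\<^sup>+y. ennreal (L y) \<partial>lborel) + (\<integral>\<^sup>+y. ennreal (L y * \<bar>y\<bar> powr p) \<partial>lborel))"
proof -
  define c where "c = 2 powr (p - 1) * modulus (1 / w) powr p"
  have pointwise: "shift_diff (y / w) \<le> ennreal c * (1 + ennreal (\<bar>y\<bar> powr p))" for y
  proof -
    have "shift_diff (y / w) \<le> ennreal (modulus (1 / w) powr p) * ennreal_powr (1 + ennreal \<bar>y\<bar>) p"
    proof -
      have "1 + ennreal \<bar>y\<bar> = ennreal (1 + \<bar>y\<bar>)"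
        by simp
      then show ?thesis
        using shift_diff_div_le[OF w_pos, of y] omega_p_eq_modulus(2)[of "1 / w"] w_pos
        by (simp only:) (subst ennreal_powr_ennreal, simp_all add: powr_mult ennreal_mult mult.commute)
    qed
    also have "\<dots> \<le> ennreal (modulus (1 / w) powr p) * (ennreal (2 powr (p - 1)) * (1 + ennreal (\<bar>y\<bar> powr p)))"
      using ennreal_powr_add_le[OF p, of 1 1 1 "ennreal \<bar>y\<bar>"] ennreal_powr_ennreal[of 1 p]
      by (intro mult_left_mono) simp_all
    finally show ?thesis
      by (simp add: c_def ennreal_mult mult_ac)
  qed
  have "(\<integral>\<^sup>+y. ennreal (L y) * shift_diff (y / w) \<partial>lborel)
      \<le> (\<integral>\<^sup>+y. ennreal c * (ennreal (L y) + ennreal (L y * \<bar>y\<bar> powr p)) \<partial>lborel)"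
  proof (intro nn_integral_mono)
    fix y
    have "ennreal (L y) * shift_diff (y / w) \<le> ennreal (L y) * (ennreal c * (1 + ennreal (\<bar>y\<bar> powr p)))"
      by (intro mult_left_mono pointwise) simp
    also have "\<dots> = ennreal c * (ennreal (L y) + ennreal (L y * \<bar>y\<bar> powr p))"
      by (simp add: L_nonneg ennreal_mult distrib_left mult_ac)
    finally show "ennreal (L y) * shift_diff (y / w) \<le> ennreal c * (ennreal (L y) + ennreal (L y * \<bar>y\<bar> powr p))" .
  qed
  also have "\<dots> = ennreal c * ((\<integral>\<^sup>+y. ennreal (L y) \<partial>lborel) + (\<integral>\<^sup>+y. ennreal (L y * \<bar>y\<bar> powr p) \<partial>lborel))"
    by (simp add: nn_integral_cmult nn_integral_add)
  finally show ?thesis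
    by (simp add: c_def)
qed

lemma nn_integral_node_error_powr_le_modulus:
  assumes L: "integrable lborel L" and L_moment: "integrable lborel (\<lambda>u. L u * \<bar>u\<bar> powr p)"
  shows "(\<integral>\<^sup>+x. ennreal_powr (node_error x) p \<partial>lborel)
    \<le> ennreal ((\<delta> powr (- 1 / p) * (2 * m) powr ((p - 1) / p)
        * ((LINT u|lborel. L u) + (LINT u|lborel. L u * \<bar>u\<bar> powr p)) powr (1 / p)
        * modulus (1 / w)) powr p)"
proof -
  define M where "M = (LINT u|lborel. L u) + (LINT u|lborel. L u * \<bar>u\<bar> powr p)"
  define \<omega> where "\<omega> = modulus (1 / w)"
  have \<omega>: "0 \<le> \<omega>"
    using omega_p_eq_modulus(2)[of "1 / w"] w_pos by (simp add: \<omega>_def)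
  have M: "(\<integral>\<^sup>+u. ennreal (L u) \<partial>lborel) + (\<integral>\<^sup>+u. ennreal (L u * \<bar>u\<bar> powr p) \<partial>lborel) = ennreal M"
    "0 \<le> M"
    using L L_moment L_nonneg
    by (simp_all add: M_def nn_integral_eq_integral integral_nonneg_AE flip: ennreal_plus)
  have "(\<integral>\<^sup>+x. ennreal_powr (node_error x) p \<partial>lborel)
      \<le> ennreal (m powr (p - 1) / \<delta>) * (\<integral>\<^sup>+y. ennreal (L y) * shift_diff (y / w) \<partial>lborel)"
    by (rule nn_integral_node_error_powr_le)
  also have "\<dots> \<le> ennreal (m powr (p - 1) / \<delta>) * (ennreal (2 powr (p - 1) * \<omega> powr p) * ennreal M)"
    unfolding \<omega>_def M(1)[symmetric] by (intro mult_left_mono nn_integral_L_shift_diff_le) simp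
  also have "\<dots> = ennreal (m powr (p - 1) / \<delta> * (2 powr (p - 1) * \<omega> powr p) * M)"
    using m_nonneg delta_pos M(2) by (intro ennreal_mult_mult) auto
  also have "m powr (p - 1) / \<delta> * (2 powr (p - 1) * \<omega> powr p) * M
      = (\<delta> powr (- 1 / p) * (2 * m) powr ((p - 1) / p) * M powr (1 / p) * \<omega>) powr p"
  proof -
    have "((2 * m) powr ((p - 1) / p)) powr p = (2 * m) powr (p - 1)"
      using p_pos by (simp add: powr_powr)
    also have "\<dots> = 2 powr (p - 1) * m powr (p - 1)"
      using m_nonneg by (simp add: powr_mult)
    finally have "(\<delta> powr (- 1 / p) * (2 * m) powr ((p - 1) / p) * M powr (1 / p) * \<omega>) powr p
        = 1 / \<delta> * (2 powr (p - 1) * m powr (p - 1)) * M * \<omega> powr p"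
      using \<omega> M(2) m_nonneg delta_pos p_pos by (subst powr_prod4) (simp_all add: powr_root_powr)
    then show ?thesis
      by simp
  qed
  finally show ?thesis
    by (simp add: M_def \<omega>_def)
qed

lemma local_error_powr_le:
  "ennreal_powr (local_error x) p \<le> ennreal (m powr (p - 1) * m * (w / \<delta>)) *
    (\<integral>\<^sup>+s. indicator {0..\<Delta> / w} s * ennreal (\<bar>f (x + s) - f x\<bar> powr p) \<partial>lborel)"
    (is "_ \<le> _ * ?Q")
proof -
  have window_le: "(\<integral>\<^sup>+s. window k s * ennreal (\<bar>f (x + s) - f x\<bar> powr p) \<partial>lborel) \<le> ennreal (w / \<delta>) * ?Q" for k
  proof -
    have "(\<integral>\<^sup>+s. window k s * ennreal (\<bar>f (x + s) - f x\<bar> powr p) \<partial>lborel)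
        \<le> (\<integral>\<^sup>+s. ennreal (w / \<delta>) * (indicator {0..\<Delta> / w} s * ennreal (\<bar>f (x + s) - f x\<bar> powr p)) \<partial>lborel)"
      by (intro nn_integral_mono) (simp add: mult.assoc[symmetric] mult_right_mono window_le_uniform)
    then show ?thesis
      by (simp add: nn_integral_cmult)
  qed
  have "ennreal_powr (local_error x) p \<le> ennreal (m powr (p - 1)) *
      (\<integral>\<^sup>+k. ennreal (L (w * x - t k)) * (ennreal (w / \<delta>) * ?Q) \<partial>count_space UNIV)"
    unfolding local_error_def
    by (rule order_trans[OF ennreal_powr_error_sum_le]) (simp_all add: mult_left_mono nn_integral_mono window_le)
  also have "\<dots> \<le> ennreal (m powr (p - 1)) * (ennreal m * (ennreal (w / \<delta>) * ?Q))"
    using nn_integral_L_samples_le[of "w * x"]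
    by (simp add: nn_integral_multc mult_left_mono mult_right_mono)
  also have "\<dots> = ennreal (m powr (p - 1)) * (ennreal m * ennreal (w / \<delta>)) * ?Q"
    by (simp only: mult.assoc)
  also have "\<dots> = ennreal (m powr (p - 1) * m * (w / \<delta>)) * ?Q"
    using m_nonneg w_pos delta_pos by (subst ennreal_mult_mult) auto
  finally show ?thesis .
qed

lemma nn_integral_local_error_powr_le:
  "(\<integral>\<^sup>+x. ennreal_powr (local_error x) p \<partial>lborel) \<le> ennreal (m powr p * \<Delta> / \<delta> * modulus (\<Delta> / w) powr p)"
proof -
  define C where "C = m powr (p - 1) * m * (w / \<delta>)"
  have "(\<integral>\<^sup>+x. ennreal_powr (local_error x) p \<partial>lborel)
      \<le> (\<integral>\<^sup>+x. ennreal C * (\<integral>\<^sup>+s. indicator {0..\<Delta> / w} s * ennreal (\<bar>f (x + s) - f x\<bar> powr p) \<partial>lborel) \<partial>lborel)"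
    unfolding C_def by (intro nn_integral_mono local_error_powr_le)
  also have "\<dots> \<le> ennreal C * (ennreal (modulus (\<Delta> / w) powr p) * ennreal (\<Delta> / w))"
    using w_pos Delta_pos
    by (simp add: nn_integral_cmult mult_left_mono nn_integral_shift_diff_Icc_le)
  also have "\<dots> = ennreal (C * modulus (\<Delta> / w) powr p * (\<Delta> / w))"
    using m_nonneg w_pos delta_pos Delta_pos by (intro ennreal_mult_mult) (auto simp: C_def)
  also have "C * modulus (\<Delta> / w) powr p * (\<Delta> / w) = m powr p * \<Delta> / \<delta> * modulus (\<Delta> / w) powr p"
    using m_nonneg w_pos p by (cases "m = 0") (simp_all add: C_def powr_diff)
  finally show ?thesis .
qed

lemma nn_integral_local_error_powr_le_modulus:
  "(\<integral>\<^sup>+x. ennreal_powr (local_error x) p \<partial>lborel)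
    \<le> ennreal ((\<delta> powr (- 1 / p) * m * \<Delta> powr (1 / p) * modulus (\<Delta> / w)) powr p)"
proof -
  have "(\<delta> powr (- 1 / p) * m * \<Delta> powr (1 / p) * modulus (\<Delta> / w)) powr p
      = 1 / \<delta> * m powr p * \<Delta> * modulus (\<Delta> / w) powr p"
    using p_pos delta_pos Delta_pos m_nonneg omega_p_eq_modulus(2)[of "\<Delta> / w"] w_pos
    by (subst powr_prod4) (simp_all add: powr_root_powr)
  then show ?thesis
    using nn_integral_local_error_powr_le by simp
qed

lemma Lp_norm_S_op_sub_le:
  assumes L: "integrable lborel L"
    and L_moment: "(\<integral>\<^sup>+u. ennreal (L u * \<bar>u\<bar> powr p) \<partial>lborel) < \<infinity>"
    and \<tau>: "0 \<le> \<tau>" and T: "\<And>x. Tw K t w x \<le> ereal \<tau>"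
  shows "Lp_norm p (\<lambda>x. S_op K t w f x - f x)
       \<le> ereal (\<delta> powr (- 1 / p) * (2 * m) powr ((p - 1) / p)
                 * ((LINT u|lborel. L u) + (LINT u|lborel. L u * \<bar>u\<bar> powr p)) powr (1 / p))
           * omega_p p f (1 / w)
         + ereal (\<delta> powr (- 1 / p) * m * \<Delta> powr (1 / p)) * omega_p p f (\<Delta> / w)
         + ereal \<tau> * Lp_norm p f"
proof -
  have L_moment': "integrable lborel (\<lambda>u. L u * \<bar>u\<bar> powr p)"
    using L_moment L_nonneg by (intro integrableI_nonneg) (auto simp: less_top)
  define A1 where "A1 = \<delta> powr (- 1 / p) * (2 * m) powr ((p - 1) / p)
      * ((LINT u|lborel. L u) + (LINT u|lborel. L u * \<bar>u\<bar> powr p)) powr (1 / p) * modulus (1 / w)"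
  define A2 where "A2 = \<delta> powr (- 1 / p) * m * \<Delta> powr (1 / p) * modulus (\<Delta> / w)"
  define A3 where "A3 = \<tau> * norm_f"
  have A: "0 \<le> A1" "0 \<le> A2" "0 \<le> A3"
    using omega_p_eq_modulus(2)[of "1 / w"] omega_p_eq_modulus(2)[of "\<Delta> / w"] w_pos Delta_pos
      m_nonneg \<tau> norm_f_nonneg
    by (simp_all add: A1_def A2_def A3_def)
  have f_term: "(\<integral>\<^sup>+x. ennreal_powr (ennreal (\<tau> * \<bar>f x\<bar>)) p \<partial>lborel) = ennreal (A3 powr p)"
    using \<tau> norm_f_nonneg
    by (simp add: A3_def powr_mult ennreal_mult ennreal_powr_cmult[OF p_pos \<tau>] nn_integral_cmult nn_integral_powr_f)
  have "(\<integral>\<^sup>+x. ennreal (\<bar>S_op K t w f x - f x\<bar> powr p) \<partial>lborel)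
      \<le> (\<integral>\<^sup>+x. ennreal_powr (node_error x + local_error x + ennreal (\<tau> * \<bar>f x\<bar>)) p \<partial>lborel)"
    using abs_S_op_sub_le[OF T] p_pos
    by (intro nn_integral_mono) (metis abs_ge_zero ennreal_powr_ennreal ennreal_powr_mono)
  also have "\<dots> \<le> ennreal ((A1 + A2 + A3) powr p)"
    using A f_term nn_integral_node_error_powr_le_modulus[OF L L_moment']
      nn_integral_local_error_powr_le_modulus
    by (intro Minkowski_nn_integral_powr[OF p]) (simp_all add: A1_def A2_def)
  finally have "Lp_norm p (\<lambda>x. S_op K t w f x - f x) \<le> ereal (A1 + A2 + A3)"
    using A by (intro Lp_norm_le p_pos) simp_all
  also have "ereal (A1 + A2 + A3) = ereal (\<delta> powr (- 1 / p) * (2 * m) powr ((p - 1) / p)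
                 * ((LINT u|lborel. L u) + (LINT u|lborel. L u * \<bar>u\<bar> powr p)) powr (1 / p))
           * omega_p p f (1 / w)
         + ereal (\<delta> powr (- 1 / p) * m * \<Delta> powr (1 / p)) * omega_p p f (\<Delta> / w)
         + ereal \<tau> * Lp_norm p f"
    using w_pos Delta_pos by (simp add: A1_def A2_def A3_def omega_p_eq_modulus Lp_norm_f)
  finally show ?thesis .
qed

end

theorem theorem3p2:
  fixes p \<delta> \<Delta> M2 \<theta>0 :: real
    and t :: "int \<Rightarrow> real"
    and K :: "real \<Rightarrow> real \<Rightarrow> real"
    and L :: "real \<Rightarrow> real"
  assumes p: "1 \<le> p"
    and samp: "sampling_seq t \<delta> \<Delta>"
    and ker: "kernel_lip K t L"
    and L1: "cond_L1 L"
    and L2: "cond_L2 L t"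
    and m0_fin: "m0_enn L t < \<infinity>"
    and Mp: "(\<integral>\<^sup>+ u. ennreal (L u * \<bar>u\<bar> powr p) \<partial>lborel) < \<infinity>"
    and M2: "M2 > 0" and \<theta>0: "\<theta>0 > 0"
    and Tbound: "\<forall>\<^sub>F w in at_top. \<forall>x. Tw K t w x \<le> ereal (M2 * w powr (- \<theta>0))"
  shows "\<forall>f. in_Lp p f \<longrightarrow>
    (\<forall>\<^sub>F w in at_top.
       Lp_norm p (\<lambda>x. S_op K t w f x - f x)
       \<le> ereal (\<delta> powr (- 1 / p) * (2 * m0 L t) powr ((p - 1) / p)
                 * ((LINT u|lborel. L u) + (LINT u|lborel. L u * \<bar>u\<bar> powr p)) powr (1 / p))
           * omega_p p f (1 / w)
         + ereal (\<delta> powr (- 1 / p) * m0 L t * \<Delta> powr (1 / p)) * omega_p p f (\<Delta> / w)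
         + ereal (M2 * w powr (- \<theta>0)) * Lp_norm p f)"
proof (intro allI impI eventually_mono[OF eventually_conj[OF eventually_gt_at_top[of 0] Tbound]],
    goal_cases)
  case (1 f w)
  then interpret Kantorovich_operator p f \<delta> \<Delta> t K L w
    using p samp ker m0_fin by unfold_locales auto
  show ?case
    using 1 M2 L1 Mp by (intro Lp_norm_S_op_sub_le) (auto simp: cond_L1_def)
qed

end
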